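(* For any Rauzy class there exists an admissible word $\mathbf q$ (a finite path in the Rauzy graph) which is simple, whose matrix $A(\mathbf q)$ has strictly positive entries, and such that the associated substitution $\zeta=\zeta_{\mathbf q}$ (with $Q=\mathsf S_\zeta=A(\mathbf q)^t$) admits good return words $u_1,\dots,u_m$ whose population vectors $\vec\ell(u_1),\dots,\vec\ell(u_m)$ generate $\mathbb Z^m$ as a free abelian group.
   Context: Interval exchange transformations (IETs) of $m$ intervals with combinatorics in a fixed Rauzy class; the Rauzy graph is the directed graph whose vertices are the permutations in the class and whose edges correspond to the two Rauzy induction operations, labeled "a" and "b". A finite path $V$ in the Rauzy graph (an admissible word) determines a pair of intervals $J\subset I$ with IETs $T_I$ (subintervals $I_1,\dots,I_m$) and $T_J$ (subintervals $J_1,\dots,J_m$), $T_J$ the first return map of $T_I$ to $J$; with $r_i=\min\{k>0:T_I^kJ_i\subset J\}$ and $n(i,k)$ defined by $T_I^kJ_i\subset I_{n(i,k)}$, the associated substitution on $\{1,\dots,m\}$ is $\zeta_V(i)=n(i,0)n(i,1)\cdots n(i,r_i-1)$; concatenation satisfies $\zeta_{V_1V_2}=\zeta_{V_2}\zeta_{V_1}$, and $A(V)=\mathsf S_{\zeta_V}^t$ with $\mathsf S_\zeta(i,j)=\#\{i\text{ in }\zeta(j)\}$. A word $q_1\dots q_k$ (here in the edges of the path) is simple if $q_i\dots q_k\ne q_1\dots q_{k-i+1}$ for $2\le i\le k$. A word $v$ is a good return word for $\zeta$ if it starts with some letter $c$ and $vc$ occurs in $\zeta(j)$ for every letter $j$;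 $\vec\ell(v)$ is the population vector of $v$. *)

theory Defs
  imports Main
begin

text \<open>Combinatorial setting (Veech's convention).  A permutation \<pi> of {1..m} is a function nat => nat that is a bijection
  of {1..m} and the identity outside {1..m}; the IET with combinatorics \<pi> sends
  the i-th subinterval I_i to the \<pi>(i)-th position.\<close>

definition is_perm :: "nat \<Rightarrow> (nat \<Rightarrow> nat) \<Rightarrow> bool" where
  "is_perm m \<pi> \<longleftrightarrow> bij_betw \<pi> {1..m} {1..m} \<and> (\<forall>j. j \<notin> {1..m} \<longrightarrow> \<pi> j = j)"

definition irreducible :: "nat \<Rightarrow> (nat \<Rightarrow> nat) \<Rightarrow> bool" where
  "irreducible m \<pi> \<longleftrightarrow> (\<forall>k. 1 \<le> k \<and> k < m \<longrightarrow> \<pi> ` {1..k} \<noteq> {1..k})"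

text \<open>k = \<pi>^{-1}(m), the interval that is placed last by the IET.\<close>
definition last_pre :: "nat \<Rightarrow> (nat \<Rightarrow> nat) \<Rightarrow> nat" where
  "last_pre m \<pi> = the_inv_into {1..m} \<pi> m"

datatype rlabel = La | Lb

definition rauzy_a :: "nat \<Rightarrow> (nat \<Rightarrow> nat) \<Rightarrow> nat \<Rightarrow> nat" where
  "rauzy_a m \<pi> j = (let k = last_pre m \<pi> in
     if j < 1 \<or> m < j then j
     else if j \<le> k then \<pi> j
     else if j = k + 1 then \<pi> m
     else \<pi> (j - 1))"

definition rauzy_b :: "nat \<Rightarrow> (nat \<Rightarrow> nat) \<Rightarrow> nat \<Rightarrow> nat" where
  "rauzy_b m \<pi> j =
     (if j < 1 \<or> m < j then j
      else if \<pi> j \<le> \<pi> m then \<pi> j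
      else if \<pi> j < m then \<pi> j + 1
      else \<pi> m + 1)"

definition rauzy_step :: "nat \<Rightarrow> rlabel \<Rightarrow> (nat \<Rightarrow> nat) \<Rightarrow> (nat \<Rightarrow> nat)" where
  "rauzy_step m c \<pi> = (case c of La \<Rightarrow> rauzy_a m \<pi> | Lb \<Rightarrow> rauzy_b m \<pi>)"

text \<open>Substitution of one Rauzy step: zeta(i) = n(i,0) ... n(i,r_i - 1), the itinerary
  of the new subinterval J_i through the old subintervals I_n before returning to J.
  Step a (bottom-last interval I_k longer than I_m): I_k splits into J_k, J_{k+1};
  step b (I_m longer): I_k passes through I_m before returning.\<close>
definition step_subst :: "nat \<Rightarrow> rlabel \<Rightarrow> (nat \<Rightarrow> nat) \<Rightarrow> nat \<Rightarrow> nat list" where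
  "step_subst m c \<pi> j = (let k = last_pre m \<pi> in
     case c of
       La \<Rightarrow> (if j \<le> k then [j] else if j = k + 1 then [k, m] else [j - 1])
     | Lb \<Rightarrow> (if j = k then [k, m] else [j]))"

fun path_edges :: "nat \<Rightarrow> (nat \<Rightarrow> nat) \<Rightarrow> rlabel list \<Rightarrow> ((nat \<Rightarrow> nat) \<times> rlabel) list" where
  "path_edges m \<pi> [] = []"
| "path_edges m \<pi> (c # cs) = (\<pi>, c) # path_edges m (rauzy_step m c \<pi>) cs"

text \<open>zeta of a path: zeta_{c V} (i) = zeta_c applied (as a morphism) to zeta_V(i);
  this is the itinerary of the final subintervals through the initial ones.\<close>
fun path_subst :: "nat \<Rightarrow> (nat \<Rightarrow> nat) \<Rightarrow> rlabel list \<Rightarrow> nat \<Rightarrow> nat list" where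
  "path_subst m \<pi> [] = (\<lambda>i. [i])"
| "path_subst m \<pi> (c # cs) =
     (\<lambda>i. concat (map (step_subst m c \<pi>) (path_subst m (rauzy_step m c \<pi>) cs i)))"

definition rauzy_rel :: "nat \<Rightarrow> ((nat \<Rightarrow> nat) \<times> (nat \<Rightarrow> nat)) set" where
  "rauzy_rel m = {(\<pi>, rauzy_step m c \<pi>) | \<pi> c. True}"

definition rauzy_class :: "nat \<Rightarrow> (nat \<Rightarrow> nat) \<Rightarrow> (nat \<Rightarrow> nat) set" where
  "rauzy_class m \<pi>0 = {\<pi>. (\<pi>0, \<pi>) \<in> (rauzy_rel m)\<^sup>*}"

definition simple_word :: "'a list \<Rightarrow> bool" where
  "simple_word q \<longleftrightarrow> (\<forall>i. 1 \<le> i \<and> i < length q \<longrightarrow> drop i q \<noteq> take (length q - i) q)"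

definition subst_matrix :: "(nat \<Rightarrow> nat list) \<Rightarrow> nat \<Rightarrow> nat \<Rightarrow> nat" where
  "subst_matrix \<zeta> i j = count_list (\<zeta> j) i"

definition rauzy_matrix :: "nat \<Rightarrow> (nat \<Rightarrow> nat) \<Rightarrow> rlabel list \<Rightarrow> nat \<Rightarrow> nat \<Rightarrow> nat" where
  "rauzy_matrix m \<pi> q i j = subst_matrix (path_subst m \<pi> q) j i"

definition good_return_word :: "nat \<Rightarrow> (nat \<Rightarrow> nat list) \<Rightarrow> nat list \<Rightarrow> bool" where
  "good_return_word m \<zeta> v \<longleftrightarrow> v \<noteq> [] \<and>
     (\<forall>j\<in>{1..m}. \<exists>x y. \<zeta> j = x @ v @ [hd v] @ y)"

definition pop_vec :: "nat list \<Rightarrow> nat \<Rightarrow> int" where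
  "pop_vec v i = int (count_list v i)"

definition generates_Zm :: "nat \<Rightarrow> (nat \<Rightarrow> nat \<Rightarrow> int) \<Rightarrow> bool" where
  "generates_Zm m w \<longleftrightarrow> (\<forall>x :: nat \<Rightarrow> int. \<exists>c :: nat \<Rightarrow> int.
      \<forall>i\<in>{1..m}. x i = (\<Sum>k=1..m. c k * w k i))"

end

(*
  Every Rauzy class contains a standard permutation (\<pi> 1 = m), and starting there the
  path a^N makes every column of the substitution begin with the letter 1. Appending
  b P P' b, with P and P' positive paths of bounded length, puts every letter into every
  column at a non-final position. Hence each column u_k of a^N, followed by the letter 1,
  occurs in every column of the whole substitution: the u_k are good return words. Their
  population vectors generate Z^m because every Rauzy substitution is unimodular, and the
  path is simple because it is a long block of a's followed by a word that begins and
  ends with b.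

  Standard permutations and positive paths both come from one combinatorial fact: if
  sets attached to the letters are transported along Rauzy moves like the columns of the
  substitution, and at every vertex reached the two letters competing in the next move
  carry equal sets, then all letters carry the same set.
*)

theory Submission
  imports Defs "HOL-Combinatorics.Permutations"
begin

section \<open>Irreducible permutations\<close>

lemma is_perm_iff_permutes: "is_perm m \<pi> \<longleftrightarrow> \<pi> permutes {1..m}"
  unfolding is_perm_def using bij_imp_permutes permutes_imp_bij permutes_not_in by metis

lemma last_pre_eqI:
  assumes "\<pi> permutes {1..m}" "j \<in> {1..m}" "\<pi> j = m"
  shows "last_pre m \<pi> = j"
  unfolding last_pre_def by (rule the_inv_into_f_eq[OF permutes_inj_on[OF assms(1)] assms(3,2)])

lemma
  assumes "\<pi> permutes {1..m}" "1 \<le> m"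
  shows last_pre_mem: "last_pre m \<pi> \<in> {1..m}"
    and last_pre_maps_to_last: "\<pi> (last_pre m \<pi>) = m"
proof -
  have "inv \<pi> m \<in> {1..m}" "\<pi> (inv \<pi> m) = m"
    using assms permutes_in_image[OF permutes_inv[OF assms(1)]] permutes_inverses(1)[OF assms(1)]
    by auto
  then show "last_pre m \<pi> \<in> {1..m}" "\<pi> (last_pre m \<pi>) = m"
    using last_pre_eqI[OF assms(1)] by auto
qed

lemma irreducible_not_invariant:
  assumes "\<pi> permutes {1..m}" "irreducible m \<pi>" "1 \<le> t" "t < m"
  shows "\<not> \<pi> ` {1..t} \<subseteq> {1..t}"
proof
  assume "\<pi> ` {1..t} \<subseteq> {1..t}"
  then have "\<pi> ` {1..t} = {1..t}"
    using endo_inj_surj[OF finite_atLeastAtMost _ permutes_inj_on[OF assms(1)]] by blast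
  then show False using assms(2-4) unfolding irreducible_def by blast
qed

lemma irreducible_last_not_fixed:
  assumes p: "\<pi> permutes {1..m}" and "irreducible m \<pi>" "2 \<le> m"
  shows "\<pi> m \<noteq> m"
proof
  assume fix_m: "\<pi> m = m"
  have "\<pi> ` {1..m - 1} \<subseteq> {1..m - 1}"
  proof
    fix y assume "y \<in> \<pi> ` {1..m - 1}"
    then obtain i where i: "i \<in> {1..m - 1}" "y = \<pi> i" by auto
    then have "\<pi> i \<noteq> \<pi> m" using permutes_inj[OF p] assms(3) by (auto simp: inj_eq)
    moreover have "\<pi> i \<in> {1..m}" using i permutes_in_image[OF p, of i] by auto
    ultimately show "y \<in> {1..m - 1}" using i fix_m by auto
  qed
  then show False using irreducible_not_invariant[OF p] assms by simp
qed

lemma last_pre_less: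
  assumes "\<pi> permutes {1..m}" "irreducible m \<pi>" "2 \<le> m"
  shows "last_pre m \<pi> < m"
proof -
  have "last_pre m \<pi> \<noteq> m"
    using last_pre_maps_to_last[OF assms(1)] irreducible_last_not_fixed[OF assms] assms(3) by auto
  then show ?thesis using last_pre_mem[OF assms(1)] assms(3) by simp
qed

section \<open>The Rauzy moves\<close>

definition cycle_to_end :: "nat \<Rightarrow> nat \<Rightarrow> nat \<Rightarrow> nat" where
  "cycle_to_end m k j = (if j \<le> k then j else if j = k + 1 then m else j - 1)"

definition cycle_from_end :: "nat \<Rightarrow> nat \<Rightarrow> nat \<Rightarrow> nat" where
  "cycle_from_end m k v = (if v \<le> k then v else if v < m then v + 1 else k + 1)"

lemma rauzy_a_eq: "j \<in> {1..m} \<Longrightarrow> rauzy_a m \<pi> j = \<pi> (cycle_to_end m (last_pre m \<pi>) j)"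
  unfolding rauzy_a_def cycle_to_end_def Let_def by auto

lemma rauzy_b_eq: "j \<in> {1..m} \<Longrightarrow> rauzy_b m \<pi> j = cycle_from_end m (\<pi> m) (\<pi> j)"
  unfolding rauzy_b_def cycle_from_end_def by auto

lemma cycle_to_end_bij_betw:
  assumes "k \<le> m"
  shows "bij_betw (cycle_to_end m k) {1..m} {1..m}"
proof -
  have "inj_on (cycle_to_end m k) {1..m}"
    by (auto simp: inj_on_def cycle_to_end_def split: if_splits)
  moreover have "cycle_to_end m k ` {1..m} \<subseteq> {1..m}"
    using assms by (auto simp: cycle_to_end_def)
  ultimately show ?thesis
    using endo_inj_surj[of "{1..m}"] by (simp add: bij_betw_def)
qed

lemma cycle_from_end_bij_betw:
  assumes "k \<le> m"
  shows "bij_betw (cycle_from_end m k) {1..m} {1..m}"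
proof -
  have "inj_on (cycle_from_end m k) {1..m}"
    using assms by (auto simp: inj_on_def cycle_from_end_def split: if_splits)
  moreover have "cycle_from_end m k ` {1..m} \<subseteq> {1..m}"
    using assms by (auto simp: cycle_from_end_def)
  ultimately show ?thesis
    using endo_inj_surj[of "{1..m}"] by (simp add: bij_betw_def)
qed

lemma rauzy_a_permutes:
  assumes p: "\<pi> permutes {1..m}" and "1 \<le> m"
  shows "rauzy_a m \<pi> permutes {1..m}"
proof (rule bij_imp_permutes)
  have "bij_betw (\<pi> \<circ> cycle_to_end m (last_pre m \<pi>)) {1..m} {1..m}"
    using cycle_to_end_bij_betw last_pre_mem[OF assms] permutes_imp_bij[OF p]
    by (auto intro: bij_betw_trans)
  then show "bij_betw (rauzy_a m \<pi>) {1..m} {1..m}"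
    by (rule bij_betw_cong[THEN iffD1, rotated]) (simp add: rauzy_a_eq)
qed (auto simp: rauzy_a_def)

lemma rauzy_b_permutes:
  assumes p: "\<pi> permutes {1..m}" and "1 \<le> m"
  shows "rauzy_b m \<pi> permutes {1..m}"
proof (rule bij_imp_permutes)
  have "\<pi> m \<in> {1..m}" using permutes_in_image[OF p] assms(2) by simp
  then have "bij_betw (cycle_from_end m (\<pi> m) \<circ> \<pi>) {1..m} {1..m}"
    using cycle_from_end_bij_betw permutes_imp_bij[OF p] by (auto intro: bij_betw_trans)
  then show "bij_betw (rauzy_b m \<pi>) {1..m} {1..m}"
    by (rule bij_betw_cong[THEN iffD1, rotated]) (simp add: rauzy_b_eq)
qed (auto simp: rauzy_b_def)

lemma rauzy_a_irreducible:
  assumes p: "\<pi> permutes {1..m}" and ir: "irreducible m \<pi>" and m: "1 \<le> m"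
  shows "irreducible m (rauzy_a m \<pi>)"
  unfolding irreducible_def
proof (intro allI impI)
  fix t assume t: "1 \<le> t \<and> t < m"
  let ?K = "last_pre m \<pi>"
  have K: "?K \<in> {1..m}" "\<pi> ?K = m" using last_pre_mem[OF p m] last_pre_maps_to_last[OF p m] by auto
  show "rauzy_a m \<pi> ` {1..t} \<noteq> {1..t}"
  proof (cases "t \<le> ?K")
    case True
    then have "rauzy_a m \<pi> ` {1..t} = \<pi> ` {1..t}"
      using K by (intro image_cong[OF refl]) (auto simp: rauzy_a_def Let_def)
    then show ?thesis using ir t unfolding irreducible_def by auto
  next
    case False
    then have "m \<in> rauzy_a m \<pi> ` {1..t}"
      using K by (intro image_eqI[of _ _ ?K]) (auto simp: rauzy_a_def)
    moreover have "m \<notin> {1..t}" using t by simp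
    ultimately show ?thesis by blast
  qed
qed

lemma rauzy_b_irreducible:
  assumes p: "\<pi> permutes {1..m}" and ir: "irreducible m \<pi>" and m: "1 \<le> m"
  shows "irreducible m (rauzy_b m \<pi>)"
  unfolding irreducible_def
proof (intro allI impI notI)
  fix t assume t: "1 \<le> t \<and> t < m" and inv: "rauzy_b m \<pi> ` {1..t} = {1..t}"
  have pm: "\<pi> m \<in> {1..m}" using permutes_in_image[OF p] m by simp
  show False
  proof (cases "\<pi> m \<le> t")
    case True
    moreover have "rauzy_b m \<pi> m = \<pi> m" using m by (simp add: rauzy_b_def)
    ultimately obtain i where "i \<in> {1..t}" "rauzy_b m \<pi> i = rauzy_b m \<pi> m"
      using inv pm by (metis atLeastAtMost_iff imageE)
    then show False using permutes_inj[OF rauzy_b_permutes[OF p m]] t by (auto simp: inj_eq)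
  next
    case False
    have "\<pi> ` {1..t} \<subseteq> {1..t}"
    proof
      fix y assume "y \<in> \<pi> ` {1..t}"
      then obtain i where i: "i \<in> {1..t}" "y = \<pi> i" by auto
      have "rauzy_b m \<pi> i \<in> {1..t}" using inv i by auto
      moreover have "\<pi> i \<in> {1..m}" using i t permutes_in_image[OF p, of i] by auto
      ultimately show "y \<in> {1..t}" using False i t by (auto simp: rauzy_b_def split: if_splits)
    qed
    then show False using irreducible_not_invariant[OF p ir] t by auto
  qed
qed

lemma rauzy_step_permutes:
  assumes "\<pi> permutes {1..m}" "1 \<le> m"
  shows "rauzy_step m c \<pi> permutes {1..m}"
  using rauzy_a_permutes[OF assms] rauzy_b_permutes[OF assms]
  by (cases c) (simp_all add: rauzy_step_def)

lemma rauzy_step_irreducible: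
  assumes "\<pi> permutes {1..m}" "irreducible m \<pi>" "1 \<le> m"
  shows "irreducible m (rauzy_step m c \<pi>)"
  using rauzy_a_irreducible[OF assms] rauzy_b_irreducible[OF assms]
  by (cases c) (simp_all add: rauzy_step_def)

lemma fold_rauzy_step_permutes:
  assumes "\<pi> permutes {1..m}" "1 \<le> m"
  shows "fold (rauzy_step m) q \<pi> permutes {1..m}"
  using assms(1)
proof (induction q arbitrary: \<pi>)
  case (Cons c q)
  show ?case using Cons.IH[OF rauzy_step_permutes[OF Cons.prems assms(2)]] by simp
qed simp

lemma fold_rauzy_step_irreducible:
  assumes "\<pi> permutes {1..m}" "irreducible m \<pi>" "1 \<le> m"
  shows "irreducible m (fold (rauzy_step m) q \<pi>)"
  using assms(1,2)
proof (induction q arbitrary: \<pi>)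
  case (Cons c q)
  show ?case
    using Cons.IH[OF rauzy_step_permutes[OF Cons.prems(1) assms(3)]
        rauzy_step_irreducible[OF Cons.prems assms(3)]] by simp
qed simp

lemma rauzy_class_step: "\<pi> \<in> rauzy_class m \<pi>0 \<Longrightarrow> rauzy_step m c \<pi> \<in> rauzy_class m \<pi>0"
  unfolding rauzy_class_def rauzy_rel_def by (auto intro: rtrancl_into_rtrancl)

lemma rauzy_class_fold: "\<pi> \<in> rauzy_class m \<pi>0 \<Longrightarrow> fold (rauzy_step m) q \<pi> \<in> rauzy_class m \<pi>0"
  by (induction q arbitrary: \<pi>) (simp_all add: rauzy_class_step)

lemma rauzy_class_permutes_irreducible:
  assumes "\<pi> \<in> rauzy_class m \<pi>0" "\<pi>0 permutes {1..m}" "irreducible m \<pi>0" "1 \<le> m"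
  shows "\<pi> permutes {1..m} \<and> irreducible m \<pi>"
proof -
  have "(\<pi>0, \<pi>) \<in> (rauzy_rel m)\<^sup>*" using assms(1) unfolding rauzy_class_def by simp
  then show ?thesis
  proof (induction rule: rtrancl_induct)
    case (step \<sigma> \<tau>)
    then obtain c where "\<tau> = rauzy_step m c \<sigma>" unfolding rauzy_rel_def by auto
    then show ?case using step rauzy_step_permutes rauzy_step_irreducible assms(4) by simp
  qed (use assms in simp)
qed

lemma finite_rauzy_class:
  assumes "\<pi>0 permutes {1..m}" "irreducible m \<pi>0" "1 \<le> m"
  shows "finite (rauzy_class m \<pi>0)"
  using rauzy_class_permutes_irreducible[OF _ assms]
  by (intro finite_subset[OF _ finite_permutations[of "{1..m}"]]) auto

lemma concat_map_concat:
  "concat (map f (concat xss)) = concat (map (\<lambda>xs. concat (map f xs)) xss)"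
  by (induction xss) auto

lemma path_subst_append:
  "path_subst m \<pi> (q @ r) j
     = concat (map (path_subst m \<pi> q) (path_subst m (fold (rauzy_step m) q \<pi>) r j))"
proof (induction q arbitrary: \<pi> j)
  case Nil
  show ?case by (induction "path_subst m \<pi> r j") auto
next
  case (Cons c q)
  show ?case by (simp add: Cons concat_map_concat comp_def)
qed

lemma path_subst_snoc:
  "path_subst m \<pi> (q @ [c]) j
     = concat (map (path_subst m \<pi> q) (step_subst m c (fold (rauzy_step m) q \<pi>) j))"
  by (simp add: path_subst_append del: path_subst.simps) simp

lemma step_subst_nonempty: "step_subst m c \<pi> j \<noteq> []"
  unfolding step_subst_def Let_def by (cases c) auto

lemma path_subst_nonempty: "path_subst m \<pi> q j \<noteq> []"
proof (induction q arbitrary: \<pi> j)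
  case (Cons c q)
  then obtain i ys where "path_subst m (rauzy_step m c \<pi>) q j = i # ys"
    by (meson list.exhaust)
  then show ?case using step_subst_nonempty[of m c \<pi> i] by simp
qed simp

lemma step_subst_subset:
  assumes "\<pi> permutes {1..m}" "1 \<le> m" "j \<in> {1..m}"
  shows "set (step_subst m c \<pi> j) \<subseteq> {1..m}"
  using last_pre_mem[OF assms(1,2)] assms(3) unfolding step_subst_def Let_def by (cases c) auto

lemma path_subst_subset:
  assumes "\<pi> permutes {1..m}" "1 \<le> m" "j \<in> {1..m}"
  shows "set (path_subst m \<pi> q j) \<subseteq> {1..m}"
  using assms
proof (induction q arbitrary: \<pi> j)
  case (Cons c q)
  have "set (path_subst m (rauzy_step m c \<pi>) q j) \<subseteq> {1..m}"
    using Cons rauzy_step_permutes by blast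
  then show ?case using step_subst_subset[OF Cons.prems(1,2)] by fastforce
qed simp

section \<open>Unimodularity of the substitutions\<close>

lemma pop_vec_Cons: "pop_vec (a # w) i = (if i = a then 1 else 0) + pop_vec w i"
  by (simp add: pop_vec_def)

lemma pop_vec_concat_map:
  assumes "set w \<subseteq> {1..m}"
  shows "pop_vec (concat (map \<sigma> w)) i = (\<Sum>l=1..m. pop_vec w l * pop_vec (\<sigma> l) i)"
  using assms
proof (induction w)
  case Nil
  then show ?case by (simp add: pop_vec_def)
next
  case (Cons a w)
  have a: "a \<in> {1..m}" using Cons.prems by simp
  have "(\<Sum>l=1..m. pop_vec (a # w) l * pop_vec (\<sigma> l) i)
      = (\<Sum>l=1..m. (if l = a then pop_vec (\<sigma> l) i else 0) + pop_vec w l * pop_vec (\<sigma> l) i)"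
    by (rule sum.cong) (auto simp: pop_vec_Cons algebra_simps)
  also have "\<dots> = pop_vec (\<sigma> a) i + (\<Sum>l=1..m. pop_vec w l * pop_vec (\<sigma> l) i)"
    using a by (simp add: sum.distrib)
  finally show ?case using Cons by (simp add: pop_vec_def)
qed

lemma generates_Zm_cong:
  assumes "generates_Zm m w" "\<And>k i. k \<in> {1..m} \<Longrightarrow> i \<in> {1..m} \<Longrightarrow> w k i = w' k i"
  shows "generates_Zm m w'"
  unfolding generates_Zm_def
proof
  fix x :: "nat \<Rightarrow> int"
  obtain c where "\<forall>i\<in>{1..m}. x i = (\<Sum>k=1..m. c k * w k i)"
    using assms(1) unfolding generates_Zm_def by blast
  then show "\<exists>c. \<forall>i\<in>{1..m}. x i = (\<Sum>k=1..m. c k * w' k i)"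
    using assms(2) by (intro exI[of _ c]) (auto intro: sum.cong)
qed

lemma generates_Zm_concat_map:
  assumes \<sigma>: "generates_Zm m (\<lambda>l. pop_vec (\<sigma> l))"
    and \<zeta>: "generates_Zm m (\<lambda>k. pop_vec (\<zeta> k))"
    and \<zeta>_subset: "\<And>k. k \<in> {1..m} \<Longrightarrow> set (\<zeta> k) \<subseteq> {1..m}"
  shows "generates_Zm m (\<lambda>k. pop_vec (concat (map \<sigma> (\<zeta> k))))"
  unfolding generates_Zm_def
proof
  fix x :: "nat \<Rightarrow> int"
  obtain c where c: "\<forall>i\<in>{1..m}. x i = (\<Sum>l=1..m. c l * pop_vec (\<sigma> l) i)"
    using \<sigma> unfolding generates_Zm_def by blast
  obtain d where d: "\<forall>l\<in>{1..m}. c l = (\<Sum>k=1..m. d k * pop_vec (\<zeta> k) l)"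
    using \<zeta> unfolding generates_Zm_def by blast
  have "x i = (\<Sum>k=1..m. d k * pop_vec (concat (map \<sigma> (\<zeta> k))) i)" if i: "i \<in> {1..m}" for i
  proof -
    have "(\<Sum>k=1..m. d k * pop_vec (concat (map \<sigma> (\<zeta> k))) i)
        = (\<Sum>k=1..m. \<Sum>l=1..m. d k * pop_vec (\<zeta> k) l * pop_vec (\<sigma> l) i)"
      by (rule sum.cong) (simp_all add: pop_vec_concat_map[OF \<zeta>_subset] sum_distrib_left mult.assoc)
    also have "\<dots> = (\<Sum>l=1..m. \<Sum>k=1..m. d k * pop_vec (\<zeta> k) l * pop_vec (\<sigma> l) i)"
      by (rule sum.swap)
    also have "\<dots> = x i"
      using c d i by (simp add: sum_distrib_right)
    finally show ?thesis by simp
  qed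
  then show "\<exists>d. \<forall>i\<in>{1..m}. x i = (\<Sum>k=1..m. d k * pop_vec (concat (map \<sigma> (\<zeta> k))) i)"
    by blast
qed

lemma generates_Zm_singletons:
  assumes \<rho>: "bij_betw \<rho> {1..m} {1..m}"
  shows "generates_Zm m (\<lambda>k. pop_vec [\<rho> k])"
  unfolding generates_Zm_def
proof
  fix x :: "nat \<Rightarrow> int"
  have "x i = (\<Sum>k=1..m. x (\<rho> k) * pop_vec [\<rho> k] i)" if i: "i \<in> {1..m}" for i
  proof -
    have "(\<Sum>k=1..m. x (\<rho> k) * pop_vec [\<rho> k] i) = (\<Sum>k=1..m. (\<lambda>l. if l = i then x l else 0) (\<rho> k))"
      by (rule sum.cong) (auto simp: pop_vec_def)
    also have "\<dots> = (\<Sum>l=1..m. if l = i then x l else 0)"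
      by (rule sum.reindex_bij_betw[OF \<rho>])
    also have "\<dots> = x i" using i by simp
    finally show ?thesis by simp
  qed
  then show "\<exists>c. \<forall>i\<in>{1..m}. x i = (\<Sum>k=1..m. c k * pop_vec [\<rho> k] i)"
    by (intro exI[of _ "\<lambda>k. x (\<rho> k)"]) blast
qed

lemma generates_Zm_elementary:
  assumes st: "s \<in> {1..m}" "t \<in> {1..m}" "s \<noteq> t"
    and w: "\<And>k i. k \<in> {1..m} \<Longrightarrow>
      pop_vec (w k) i = (if k = i then 1 else 0) + (if k = s \<and> i = t then 1 else 0)"
  shows "generates_Zm m (\<lambda>k. pop_vec (w k))"
  unfolding generates_Zm_def
proof
  fix x :: "nat \<Rightarrow> int"
  define d where "d = x(t := x t - x s)"
  have "x i = (\<Sum>k=1..m. d k * pop_vec (w k) i)" if i: "i \<in> {1..m}" for i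
  proof -
    have "(\<Sum>k=1..m. d k * pop_vec (w k) i)
        = (\<Sum>k=1..m. (if k = i then d k else 0) + (if k = s then (if i = t then d k else 0) else 0))"
      using w by (intro sum.cong) (auto simp: algebra_simps)
    also have "\<dots> = d i + (if i = t then d s else 0)"
      using i st by (simp add: sum.distrib)
    also have "\<dots> = x i" unfolding d_def using st by auto
    finally show ?thesis by simp
  qed
  then show "\<exists>d. \<forall>i\<in>{1..m}. x i = (\<Sum>k=1..m. d k * pop_vec (w k) i)"
    by (intro exI[of _ d]) blast
qed

text \<open>Move b gives an elementary substitution; move a gives one composed with the
  reordering \<open>cycle_to_end\<close> of the letters.\<close>

lemma step_subst_generates_Zm:
  assumes p: "\<pi> permutes {1..m}" and ir: "irreducible m \<pi>" and m: "2 \<le> m"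
  shows "generates_Zm m (\<lambda>k. pop_vec (step_subst m c \<pi> k))"
proof -
  let ?K = "last_pre m \<pi>"
  have K: "?K \<in> {1..m}" "?K < m" using last_pre_mem[OF p] last_pre_less[OF p ir m] m by auto
  show ?thesis
  proof (cases c)
    case Lb
    show ?thesis
      by (rule generates_Zm_elementary[of ?K m m])
        (use K Lb in \<open>auto simp: step_subst_def pop_vec_def Let_def\<close>)
  next
    case La
    define e where "e = (\<lambda>j::nat. if j = m then [?K, m] else [j])"
    have "generates_Zm m (\<lambda>k. pop_vec (e k))"
      by (rule generates_Zm_elementary[of m m ?K]) (use K in \<open>auto simp: e_def pop_vec_def\<close>)
    moreover have "generates_Zm m (\<lambda>k. pop_vec [cycle_to_end m ?K k])"
      using generates_Zm_singletons cycle_to_end_bij_betw K by simp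
    moreover have "set [cycle_to_end m ?K k] \<subseteq> {1..m}" if "k \<in> {1..m}" for k
      using bij_betwE[OF cycle_to_end_bij_betw] that K by simp
    ultimately have "generates_Zm m (\<lambda>k. pop_vec (concat (map e [cycle_to_end m ?K k])))"
      by (rule generates_Zm_concat_map)
    then show ?thesis
      by (rule generates_Zm_cong)
        (use K La in \<open>auto simp: e_def cycle_to_end_def step_subst_def Let_def\<close>)
  qed
qed

lemma path_subst_generates_Zm:
  assumes "\<pi> permutes {1..m}" "irreducible m \<pi>" "2 \<le> m"
  shows "generates_Zm m (\<lambda>k. pop_vec (path_subst m \<pi> q k))"
  using assms(1,2)
proof (induction q arbitrary: \<pi>)
  case Nil
  show ?case using generates_Zm_singletons[OF bij_betw_id] by simp
next
  case (Cons c q)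
  have "rauzy_step m c \<pi> permutes {1..m}" "irreducible m (rauzy_step m c \<pi>)"
    using rauzy_step_permutes rauzy_step_irreducible Cons.prems assms(3) by auto
  then show ?case
    using generates_Zm_concat_map[OF step_subst_generates_Zm[OF Cons.prems assms(3)] Cons.IH]
      path_subst_subset assms(3) by simp
qed

lemma generates_Zm_occurs:
  assumes "generates_Zm m (\<lambda>k. pop_vec (w k))" "i \<in> {1..m}"
  shows "\<exists>k\<in>{1..m}. i \<in> set (w k)"
proof (rule ccontr)
  assume "\<not> (\<exists>k\<in>{1..m}. i \<in> set (w k))"
  then have zero: "pop_vec (w k) i = 0" if "k \<in> {1..m}" for k
    using that by (auto simp: pop_vec_def count_list_0_iff)
  obtain c where "\<forall>j\<in>{1..m}. (if j = i then 1 else 0) = (\<Sum>k=1..m. c k * pop_vec (w k) j)"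
    using assms(1) unfolding generates_Zm_def
    by (elim allE[of _ "\<lambda>j. if j = i then 1 else 0"]) blast
  then have "(1::int) = (\<Sum>k=1..m. c k * pop_vec (w k) i)" using assms(2) by fastforce
  also have "\<dots> = 0" using zero by simp
  finally show False by simp
qed

section \<open>Stable families\<close>

definition step_sets :: "nat \<Rightarrow> rlabel \<Rightarrow> (nat \<Rightarrow> nat) \<Rightarrow> (nat \<Rightarrow> 'x set) \<Rightarrow> nat \<Rightarrow> 'x set" where
  "step_sets m c \<pi> C j = (\<Union>i\<in>set (step_subst m c \<pi> j). C i)"

lemma step_sets_La:
  "step_sets m La \<pi> C j = (if j \<le> last_pre m \<pi> then C j
     else if j = last_pre m \<pi> + 1 then C (last_pre m \<pi>) \<union> C m else C (j - 1))"
  unfolding step_sets_def step_subst_def Let_def by auto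

lemma step_sets_Lb:
  "step_sets m Lb \<pi> C j = (if j = last_pre m \<pi> then C (last_pre m \<pi>) \<union> C m else C j)"
  unfolding step_sets_def step_subst_def Let_def by auto

definition path_sets :: "nat \<Rightarrow> (nat \<Rightarrow> nat) \<Rightarrow> rlabel list \<Rightarrow> nat \<Rightarrow> nat set" where
  "path_sets m \<pi> q j = set (path_subst m \<pi> q j)"

lemma step_sets_path_sets:
  "step_sets m c (fold (rauzy_step m) q \<pi>) (path_sets m \<pi> q) = path_sets m \<pi> (q @ [c])"
  unfolding step_sets_def path_sets_def by (simp add: path_subst_snoc del: path_subst.simps)

definition stable_family :: "nat \<Rightarrow> ((nat \<Rightarrow> nat) \<times> (nat \<Rightarrow> 'x set)) set \<Rightarrow> bool" where
  "stable_family m R \<longleftrightarrow> (\<forall>\<pi> C. (\<pi>, C) \<in> R \<longrightarrow>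
     \<pi> permutes {1..m} \<and> irreducible m \<pi> \<and> C (last_pre m \<pi>) = C m \<and>
     (\<forall>c. (rauzy_step m c \<pi>, step_sets m c \<pi> C) \<in> R))"

lemma stable_familyD:
  assumes "stable_family m R" "(\<pi>, C) \<in> R"
  shows "\<pi> permutes {1..m}" "irreducible m \<pi>" "C (last_pre m \<pi>) = C m"
    "(rauzy_a m \<pi>, step_sets m La \<pi> C) \<in> R" "(rauzy_b m \<pi>, step_sets m Lb \<pi> C) \<in> R"
  using assms unfolding stable_family_def rauzy_step_def by (metis rlabel.case)+

lemma rauzy_a_low: "i \<in> {1..last_pre m \<pi>} \<Longrightarrow> last_pre m \<pi> \<le> m \<Longrightarrow> rauzy_a m \<pi> i = \<pi> i"
  unfolding rauzy_a_def Let_def by auto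

lemma rauzy_a_shift: "last_pre m \<pi> < j \<Longrightarrow> j < m \<Longrightarrow> rauzy_a m \<pi> (j + 1) = \<pi> j"
  unfolding rauzy_a_def Let_def by auto

lemma last_pre_rauzy_a:
  assumes "\<pi> permutes {1..m}" "1 \<le> m"
  shows "last_pre m (rauzy_a m \<pi>) = last_pre m \<pi>"
  using last_pre_mem[OF assms] last_pre_maps_to_last[OF assms] rauzy_a_low[of "last_pre m \<pi>" m \<pi>]
  by (intro last_pre_eqI[OF rauzy_a_permutes[OF assms]]) auto

lemma stable_family_rotate_a:
  assumes R: "stable_family m R" and m: "2 \<le> m"
    and "(\<pi>, C) \<in> R" "last_pre m \<pi> < j" "j \<le> m"
  shows "\<exists>\<pi>' C'. (\<pi>', C') \<in> R \<and> \<pi>' m = \<pi> j \<and> C' m = C j \<and> last_pre m \<pi>' = last_pre m \<pi>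
    \<and> (\<forall>i\<in>{1..last_pre m \<pi>}. \<pi>' i = \<pi> i \<and> C' i = C i)"
  using assms(3-5)
proof (induction "m - j" arbitrary: \<pi> C j)
  case 0
  then show ?case by (intro exI[of _ \<pi>] exI[of _ C]) auto
next
  case (Suc d)
  let ?K = "last_pre m \<pi>"
  have p: "\<pi> permutes {1..m}" using stable_familyD(1)[OF R Suc.prems(1)] .
  have K: "?K \<in> {1..m}" using last_pre_mem[OF p] m by simp
  have step: "(rauzy_a m \<pi>, step_sets m La \<pi> C) \<in> R" using stable_familyD(4)[OF R Suc.prems(1)] .
  have K_step: "last_pre m (rauzy_a m \<pi>) = ?K" using last_pre_rauzy_a[OF p] m by simp
  have j: "d = m - (j + 1)" "last_pre m (rauzy_a m \<pi>) < j + 1" "j + 1 \<le> m"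
    using Suc.hyps(2) Suc.prems(2) K_step by auto
  obtain \<pi>' C' where IH: "(\<pi>', C') \<in> R" "\<pi>' m = rauzy_a m \<pi> (j + 1)"
      "C' m = step_sets m La \<pi> C (j + 1)" "last_pre m \<pi>' = ?K"
      "\<forall>i\<in>{1..?K}. \<pi>' i = rauzy_a m \<pi> i \<and> C' i = step_sets m La \<pi> C i"
    using Suc.hyps(1)[OF j(1) step j(2,3)] K_step by auto
  have "\<pi>' m = \<pi> j" "C' m = C j"
    using IH(2,3) rauzy_a_shift[of m \<pi> j] Suc.hyps(2) Suc.prems by (auto simp: step_sets_La)
  moreover have "\<forall>i\<in>{1..?K}. \<pi>' i = \<pi> i \<and> C' i = C i"
    using IH(5) rauzy_a_low[of _ m \<pi>] K by (auto simp: step_sets_La)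
  ultimately show ?case using IH(1,4) by blast
qed

lemma stable_family_rotate_b:
  assumes R: "stable_family m R" and m: "2 \<le> m"
    and "(\<pi>, C) \<in> R" "j \<in> {1..m}" "\<pi> m < \<pi> j"
  shows "\<exists>\<pi>'. (\<pi>', C) \<in> R \<and> last_pre m \<pi>' = j \<and> \<pi>' m = \<pi> m
    \<and> (\<forall>i\<in>{1..m}. \<pi> i < \<pi> m \<longrightarrow> \<pi>' i = \<pi> i)"
  using assms(3-5)
proof (induction "m - \<pi> j" arbitrary: \<pi>)
  case 0
  have p: "\<pi> permutes {1..m}" using stable_familyD(1)[OF R 0(2)] .
  have "\<pi> j = m" using 0 permutes_in_image[OF p, of j] by auto
  then show ?case using 0 last_pre_eqI[OF p] by blast
next
  case (Suc d)
  have "step_sets m Lb \<pi> C = C"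
    using stable_familyD(3)[OF R Suc.prems(1)] by (intro ext) (simp add: step_sets_Lb)
  then have step: "(rauzy_b m \<pi>, C) \<in> R" using stable_familyD(5)[OF R Suc.prems(1)] by simp
  have "\<pi> j < m" using Suc.hyps(2) by simp
  then have b_j: "rauzy_b m \<pi> j = \<pi> j + 1" and b_m: "rauzy_b m \<pi> m = \<pi> m"
    and b_low: "\<forall>i\<in>{1..m}. \<pi> i < \<pi> m \<longrightarrow> rauzy_b m \<pi> i = \<pi> i"
    using Suc.prems m by (auto simp: rauzy_b_def)
  have d: "d = m - rauzy_b m \<pi> j" "rauzy_b m \<pi> m < rauzy_b m \<pi> j"
    using Suc.hyps(2) Suc.prems(3) b_j b_m by auto
  obtain \<pi>' where "(\<pi>', C) \<in> R" "last_pre m \<pi>' = j" "\<pi>' m = rauzy_b m \<pi> m"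
      "\<forall>i\<in>{1..m}. rauzy_b m \<pi> i < rauzy_b m \<pi> m \<longrightarrow> \<pi>' i = rauzy_b m \<pi> i"
    using Suc.hyps(1)[OF d(1) step Suc.prems(2) d(2)] by blast
  then show ?case using b_m b_low by (intro exI[of _ \<pi>']) auto
qed

lemma stable_family_eq_last_from_last_pre:
  assumes R: "stable_family m R" and m: "2 \<le> m"
    and s: "(\<pi>, C) \<in> R" and j: "last_pre m \<pi> \<le> j" "j \<le> m"
  shows "C j = C m"
proof (cases "j = last_pre m \<pi>")
  case True
  then show ?thesis using stable_familyD(3)[OF R s] by simp
next
  case False
  have K: "last_pre m \<pi> \<in> {1..m}" using last_pre_mem[OF stable_familyD(1)[OF R s]] m by simp
  have "last_pre m \<pi> < j" using j(1) False by simp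
  then obtain \<pi>' C' where r: "(\<pi>', C') \<in> R" "C' m = C j" "last_pre m \<pi>' = last_pre m \<pi>"
      "\<forall>i\<in>{1..last_pre m \<pi>}. \<pi>' i = \<pi> i \<and> C' i = C i"
    using stable_family_rotate_a[OF R m s _ j(2)] by blast
  have "C' (last_pre m \<pi>) = C (last_pre m \<pi>)" using r(4) K by simp
  then show ?thesis using stable_familyD(3)[OF R r(1)] stable_familyD(3)[OF R s] r(2,3) by simp
qed

lemma stable_family_eq_last_above:
  assumes R: "stable_family m R" and m: "2 \<le> m"
    and s: "(\<pi>, C) \<in> R" and j: "j \<in> {1..m}" "\<pi> m < \<pi> j"
  shows "C j = C m"
proof -
  obtain \<pi>' where "(\<pi>', C) \<in> R" "last_pre m \<pi>' = j"
    using stable_family_rotate_b[OF R m s j] by blast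
  then show ?thesis using stable_familyD(3)[OF R] by metis
qed

lemma stable_family_descend:
  assumes R: "stable_family m R" and m: "2 \<le> m" and s: "(\<pi>, C) \<in> R"
    and j0: "j0 \<in> {1..m}" "C j0 \<noteq> C m"
    and b: "b \<in> {1..m}" "last_pre m \<pi> < b" "\<pi> b < \<pi> m"
  shows "\<exists>\<pi>' C'. (\<pi>', C') \<in> R \<and> \<pi>' m < \<pi> m \<and> (\<exists>j\<in>{1..m}. C' j \<noteq> C' m)"
proof -
  have "\<not> last_pre m \<pi> \<le> j0"
    using stable_family_eq_last_from_last_pre[OF R m s, of j0] j0 by auto
  then have "j0 \<in> {1..last_pre m \<pi>}" using j0(1) by simp
  moreover obtain \<pi>' C' where r: "(\<pi>', C') \<in> R" "\<pi>' m = \<pi> b" "C' m = C b"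
      "\<forall>i\<in>{1..last_pre m \<pi>}. \<pi>' i = \<pi> i \<and> C' i = C i"
    using stable_family_rotate_a[OF R m s b(2)] b(1) by auto
  moreover have "C b = C m" using stable_family_eq_last_from_last_pre[OF R m s, of b] b by simp
  ultimately have "C' j0 \<noteq> C' m" "\<pi>' m < \<pi> m" using j0(2) b(3) by auto
  then show ?thesis using r(1) j0(1) by blast
qed

lemma card_preimage_below:
  assumes p: "\<pi> permutes {1..m}" and v: "v \<le> m + 1"
  shows "card {b\<in>{1..m}. \<pi> b < v} = v - 1"
proof -
  have "\<pi> ` {b\<in>{1..m}. \<pi> b < v} = {1..v - 1}"
  proof
    show "\<pi> ` {b\<in>{1..m}. \<pi> b < v} \<subseteq> {1..v - 1}"
    proof
      fix y assume "y \<in> \<pi> ` {b\<in>{1..m}. \<pi> b < v}"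
      then obtain b where "b \<in> {1..m}" "\<pi> b < v" "y = \<pi> b" by blast
      then show "y \<in> {1..v - 1}" using permutes_in_image[OF p, of b] by auto
    qed
    show "{1..v - 1} \<subseteq> \<pi> ` {b\<in>{1..m}. \<pi> b < v}"
    proof
      fix y assume y: "y \<in> {1..v - 1}"
      then have "inv \<pi> y \<in> {1..m}" using v permutes_in_image[OF permutes_inv[OF p], of y] by auto
      moreover have "\<pi> (inv \<pi> y) = y" using permutes_inverses(1)[OF p] .
      ultimately show "y \<in> \<pi> ` {b\<in>{1..m}. \<pi> b < v}" using y by force
    qed
  qed
  then show ?thesis
    using card_image[OF permutes_inj_on[OF p, of "{b\<in>{1..m}. \<pi> b < v}"]] by simp
qed

lemma irreducible_descent_pair:
  assumes p: "\<pi> permutes {1..m}" and ir: "irreducible m \<pi>" and v: "1 < \<pi> m"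
  shows "\<exists>i b. i \<in> {1..m} \<and> b \<in> {1..m} \<and> i < b \<and> \<pi> m < \<pi> i \<and> \<pi> b < \<pi> m"
proof -
  let ?t = "\<pi> m - 1"
  have "m \<noteq> 0"
  proof
    assume "m = 0"
    then show False using v permutes_not_in[OF p, of 0] by simp
  qed
  then have pm: "\<pi> m \<le> m" using permutes_in_image[OF p, of m] by auto
  then have "\<not> \<pi> ` {1..?t} \<subseteq> {1..?t}" using irreducible_not_invariant[OF p ir] v by simp
  then obtain i where i: "i \<in> {1..?t}" "\<pi> i \<notin> {1..?t}" by blast
  have "i \<noteq> m" using i(1) pm by auto
  then have "\<pi> i \<noteq> \<pi> m" using permutes_inj[OF p] by (simp add: inj_eq)
  moreover have "\<pi> i \<in> {1..m}" using i(1) pm permutes_in_image[OF p, of i] by auto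
  ultimately have i_above: "\<pi> m < \<pi> i" using i(2) by auto
  have "\<exists>b\<in>{1..m}. i < b \<and> \<pi> b < \<pi> m"
  proof (rule ccontr)
    assume none_after: "\<not> (\<exists>b\<in>{1..m}. i < b \<and> \<pi> b < \<pi> m)"
    have "{b\<in>{1..m}. \<pi> b < \<pi> m} \<subseteq> {1..i - 1}"
    proof
      fix b assume b: "b \<in> {b\<in>{1..m}. \<pi> b < \<pi> m}"
      then have "\<not> i < b" using none_after by blast
      moreover have "b \<noteq> i" using b i_above by auto
      ultimately show "b \<in> {1..i - 1}" using b by auto
    qed
    then have "card {b\<in>{1..m}. \<pi> b < \<pi> m} \<le> i - 1"
      using card_mono[of "{1..i - 1}"] by fastforce
    then show False using card_preimage_below[OF p, of "\<pi> m"] pm i(1) by auto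
  qed
  moreover have "i \<in> {1..m}" using i(1) pm by auto
  ultimately show ?thesis using i_above by blast
qed

text \<open>Induction on \<open>\<pi> m\<close>: a letter whose set differs from that of \<open>m\<close> has a value below
  \<open>\<pi> m\<close>, and irreducibility provides a pair of letters along which moves b and then a
  decrease \<open>\<pi> m\<close> while keeping the sets non-constant.\<close>

theorem stable_family_const:
  assumes R: "stable_family m R" and m: "2 \<le> m" and "(\<pi>, C) \<in> R"
  shows "\<forall>j\<in>{1..m}. C j = C m"
  using assms(3)
proof (induction "\<pi> m" arbitrary: \<pi> C rule: less_induct)
  case less
  show ?case
  proof (rule ccontr)
    assume "\<not> (\<forall>j\<in>{1..m}. C j = C m)"
    then obtain j0 where j0: "j0 \<in> {1..m}" "C j0 \<noteq> C m" by blast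
    have p: "\<pi> permutes {1..m}" and ir: "irreducible m \<pi>"
      using stable_familyD(1,2)[OF R less.prems] by auto
    have "j0 \<noteq> m" using j0 by auto
    then have "\<pi> j0 \<noteq> \<pi> m" using permutes_inj[OF p] by (simp add: inj_eq)
    moreover have "\<not> \<pi> m < \<pi> j0"
      using stable_family_eq_last_above[OF R m less.prems j0(1)] j0(2) by blast
    moreover have "1 \<le> \<pi> j0" using permutes_in_image[OF p, of j0] j0(1) by simp
    ultimately have "1 < \<pi> m" by simp
    then obtain i b where ib: "i \<in> {1..m}" "b \<in> {1..m}" "i < b" "\<pi> m < \<pi> i" "\<pi> b < \<pi> m"
      using irreducible_descent_pair[OF p ir] by blast
    obtain \<pi>' where \<pi>': "(\<pi>', C) \<in> R" "last_pre m \<pi>' = i" "\<pi>' m = \<pi> m" "\<pi>' b = \<pi> b"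
      using stable_family_rotate_b[OF R m less.prems ib(1,4)] ib(2,5) by blast
    obtain \<pi>'' C'' where "(\<pi>'', C'') \<in> R" "\<pi>'' m < \<pi> m" "\<exists>j\<in>{1..m}. C'' j \<noteq> C'' m"
      using stable_family_descend[OF R m \<pi>'(1) j0 ib(2)] \<pi>'(2-4) ib(3,5) by auto
    then show False using less.hyps by blast
  qed
qed

section \<open>Standard permutations and positive paths\<close>

text \<open>Were \<open>last_pre m \<pi> \<noteq> 1\<close> at every vertex of the class, the moves would never
  change the set \<open>{1}\<close> on the letter 1 and the empty sets on the other letters.\<close>

lemma rauzy_class_has_standard:
  assumes m: "2 \<le> m" and p0: "\<pi>0 permutes {1..m}" and ir0: "irreducible m \<pi>0"
  shows "\<exists>\<pi>\<in>rauzy_class m \<pi>0. \<pi> 1 = m"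
proof (rule ccontr)
  assume none: "\<not> (\<exists>\<pi>\<in>rauzy_class m \<pi>0. \<pi> 1 = m)"
  define C :: "nat \<Rightarrow> nat set" where "C j = (if j = 1 then {1} else {})" for j
  define R where "R = {(\<pi>, C) | \<pi>. \<pi> \<in> rauzy_class m \<pi>0}"
  have "stable_family m R"
    unfolding stable_family_def
  proof (intro allI impI)
    fix \<pi> C' assume "(\<pi>, C') \<in> R"
    then have \<pi>: "\<pi> \<in> rauzy_class m \<pi>0" and C': "C' = C" unfolding R_def by auto
    have p: "\<pi> permutes {1..m}" "irreducible m \<pi>"
      using rauzy_class_permutes_irreducible[OF \<pi> p0 ir0] m by auto
    have m1: "1 \<le> m" using m by simp
    have K: "last_pre m \<pi> \<in> {1..m}" using last_pre_mem[OF p(1) m1] .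
    have K1: "last_pre m \<pi> \<noteq> 1"
    proof
      assume "last_pre m \<pi> = 1"
      then have "\<pi> 1 = m" using last_pre_maps_to_last[OF p(1) m1] by simp
      then show False using none \<pi> by blast
    qed
    have "step_sets m c \<pi> C j = C j" for c j
      using K K1 m by (cases c) (auto simp: step_sets_La step_sets_Lb C_def)
    then have "step_sets m c \<pi> C' = C'" for c unfolding C' by (simp add: fun_eq_iff)
    then have "(rauzy_step m c \<pi>, step_sets m c \<pi> C') \<in> R" for c
      using rauzy_class_step[OF \<pi>] C' unfolding R_def by simp
    moreover have "C' (last_pre m \<pi>) = C' m" using K1 m C' by (simp add: C_def)
    ultimately show "\<pi> permutes {1..m} \<and> irreducible m \<pi> \<and> C' (last_pre m \<pi>) = C' m
      \<and> (\<forall>c. (rauzy_step m c \<pi>, step_sets m c \<pi> C') \<in> R)"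
      using p by blast
  qed
  moreover have "(\<pi>0, C) \<in> R" unfolding R_def rauzy_class_def by auto
  ultimately have "\<forall>j\<in>{1..m}. C j = C m" by (rule stable_family_const[OF _ m])
  moreover have "(1::nat) \<in> {1..m}" using m by simp
  ultimately have "C 1 = C m" by blast
  then show False using m by (simp add: C_def)
qed

definition positive_subst :: "nat \<Rightarrow> (nat \<Rightarrow> nat list) \<Rightarrow> bool" where
  "positive_subst m \<zeta> \<longleftrightarrow> (\<forall>i\<in>{1..m}. \<forall>j\<in>{1..m}. i \<in> set (\<zeta> j))"

definition total_card :: "nat \<Rightarrow> (nat \<Rightarrow> 'x set) \<Rightarrow> nat" where
  "total_card m C = (\<Sum>j=1..m. card (C j))"

lemma total_card_step_La:
  assumes p: "\<pi> permutes {1..m}" and ir: "irreducible m \<pi>" and m: "2 \<le> m"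
    and fin: "\<And>j. finite (C j)"
  shows "total_card m C \<le> total_card m (step_sets m La \<pi> C)"
    and "\<not> C (last_pre m \<pi>) \<subseteq> C m \<Longrightarrow> total_card m C < total_card m (step_sets m La \<pi> C)"
proof -
  let ?K = "last_pre m \<pi>" and ?C' = "step_sets m La \<pi> C"
  have K: "?K \<in> {1..m}" "?K < m" using last_pre_mem[OF p] last_pre_less[OF p ir m] m by auto
  have reindex: "total_card m C = (\<Sum>j=1..m. card (C (cycle_to_end m ?K j)))"
    unfolding total_card_def
    using sum.reindex_bij_betw[OF cycle_to_end_bij_betw, of ?K m "\<lambda>j. card (C j)"] K by simp
  have le: "card (C (cycle_to_end m ?K j)) \<le> card (?C' j)" for j
    using fin by (intro card_mono) (auto simp: step_sets_La cycle_to_end_def)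
  show "total_card m C \<le> total_card m ?C'"
    unfolding reindex by (unfold total_card_def) (intro sum_mono le)
  show "total_card m C < total_card m ?C'" if "\<not> C ?K \<subseteq> C m"
  proof -
    have "card (C (cycle_to_end m ?K (?K + 1))) < card (?C' (?K + 1))"
      using that fin by (intro psubset_card_mono) (auto simp: step_sets_La cycle_to_end_def)
    then show ?thesis
      unfolding reindex using K le by (unfold total_card_def) (intro sum_strict_mono_ex1, auto)
  qed
qed

lemma total_card_step_Lb:
  assumes p: "\<pi> permutes {1..m}" and m: "1 \<le> m" and fin: "\<And>j. finite (C j)"
  shows "total_card m C \<le> total_card m (step_sets m Lb \<pi> C)"
    and "\<not> C m \<subseteq> C (last_pre m \<pi>) \<Longrightarrow> total_card m C < total_card m (step_sets m Lb \<pi> C)"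
proof -
  let ?K = "last_pre m \<pi>" and ?C' = "step_sets m Lb \<pi> C"
  have le: "card (C j) \<le> card (?C' j)" for j
    using fin by (intro card_mono) (auto simp: step_sets_Lb)
  show "total_card m C \<le> total_card m ?C'"
    unfolding total_card_def by (intro sum_mono le)
  show "total_card m C < total_card m ?C'" if "\<not> C m \<subseteq> C ?K"
  proof -
    have "card (C ?K) < card (?C' ?K)"
      using that fin by (intro psubset_card_mono) (auto simp: step_sets_Lb)
    then show ?thesis
      unfolding total_card_def using last_pre_mem[OF p m] le by (intro sum_strict_mono_ex1) auto
  qed
qed

lemma total_card_path_sets_snoc:
  assumes "\<pi> permutes {1..m}" "irreducible m \<pi>" "2 \<le> m"
  shows "total_card m (path_sets m \<pi> q) \<le> total_card m (path_sets m \<pi> (q @ [c]))"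
proof -
  let ?\<sigma> = "fold (rauzy_step m) q \<pi>"
  have \<sigma>: "?\<sigma> permutes {1..m}" "irreducible m ?\<sigma>"
    using fold_rauzy_step_permutes fold_rauzy_step_irreducible assms by auto
  have fin: "finite (path_sets m \<pi> q j)" for j by (simp add: path_sets_def)
  show ?thesis
    using total_card_step_La(1)[OF \<sigma> assms(3), where C = "path_sets m \<pi> q"]
      total_card_step_Lb(1)[OF \<sigma>(1), where C = "path_sets m \<pi> q"]
      fin assms(3) step_sets_path_sets[of m c q \<pi>] by (cases c) auto
qed

lemma total_card_path_sets_mono:
  assumes "\<pi> permutes {1..m}" "irreducible m \<pi>" "2 \<le> m"
  shows "total_card m (path_sets m \<pi> q) \<le> total_card m (path_sets m \<pi> (q @ r))"
proof (induction r rule: rev_induct)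
  case (snoc c r)
  then show ?case using total_card_path_sets_snoc[OF assms, of "q @ r" c] by simp
qed simp

text \<open>Beyond a path of maximal total size the sizes cannot grow, so the two letters
  competing in the next move always carry equal sets.\<close>

lemma stable_family_if_total_card_maximal:
  assumes p: "\<pi> permutes {1..m}" and ir: "irreducible m \<pi>" and m: "2 \<le> m"
    and max: "\<And>r. total_card m (path_sets m \<pi> r) \<le> total_card m (path_sets m \<pi> q)"
  shows "stable_family m {(fold (rauzy_step m) (q @ r) \<pi>, path_sets m \<pi> (q @ r)) | r. True}"
    (is "stable_family m ?R")
  unfolding stable_family_def
proof (intro allI impI)
  fix \<sigma> C assume "(\<sigma>, C) \<in> ?R"
  then obtain r where \<sigma>: "\<sigma> = fold (rauzy_step m) (q @ r) \<pi>" and C: "C = path_sets m \<pi> (q @ r)"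
    by blast
  have \<sigma>_good: "\<sigma> permutes {1..m}" "irreducible m \<sigma>"
    using fold_rauzy_step_permutes fold_rauzy_step_irreducible p ir m \<sigma> by auto
  have fin: "finite (C j)" for j by (simp add: C path_sets_def)
  have step: "step_sets m c \<sigma> C = path_sets m \<pi> (q @ r @ [c])" for c
    using step_sets_path_sets[of m c "q @ r" \<pi>] \<sigma> C by simp
  have no_growth: "\<not> total_card m C < total_card m (step_sets m c \<sigma> C)" for c
    using max[of "q @ r @ [c]"] total_card_path_sets_mono[OF p ir m, of q r] C step by simp
  have "C (last_pre m \<sigma>) = C m"
    using total_card_step_La(2)[OF \<sigma>_good m, where C = C]
      total_card_step_Lb(2)[OF \<sigma>_good(1), where C = C] fin no_growth m by fastforce
  moreover have "(rauzy_step m c \<sigma>, step_sets m c \<sigma> C) \<in> ?R" for c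
    using step \<sigma> by (intro CollectI exI[of _ "r @ [c]"]) simp
  ultimately show "\<sigma> permutes {1..m} \<and> irreducible m \<sigma> \<and> C (last_pre m \<sigma>) = C m
    \<and> (\<forall>c. (rauzy_step m c \<sigma>, step_sets m c \<sigma> C) \<in> ?R)" using \<sigma>_good by blast
qed

lemma positive_if_total_card_maximal:
  assumes p: "\<pi> permutes {1..m}" and ir: "irreducible m \<pi>" and m: "2 \<le> m"
    and max: "\<And>r. total_card m (path_sets m \<pi> r) \<le> total_card m (path_sets m \<pi> q)"
  shows "positive_subst m (path_subst m \<pi> q)"
  unfolding positive_subst_def
proof (intro ballI)
  fix i j assume i: "i \<in> {1..m}" and j: "j \<in> {1..m}"
  have "(fold (rauzy_step m) (q @ []) \<pi>, path_sets m \<pi> (q @ []))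
      \<in> {(fold (rauzy_step m) (q @ r) \<pi>, path_sets m \<pi> (q @ r)) | r. True}" by blast
  then have const: "\<forall>j\<in>{1..m}. path_sets m \<pi> q j = path_sets m \<pi> q m"
    using stable_family_const[OF stable_family_if_total_card_maximal[OF assms] m] by simp
  obtain k where "k \<in> {1..m}" "i \<in> set (path_subst m \<pi> q k)"
    using generates_Zm_occurs[OF path_subst_generates_Zm[OF p ir m] i] by blast
  then show "i \<in> set (path_subst m \<pi> q j)"
    using const j unfolding path_sets_def by metis
qed

lemma exists_positive_path:
  assumes p: "\<pi> permutes {1..m}" and ir: "irreducible m \<pi>" and m: "2 \<le> m"
  shows "\<exists>q. positive_subst m (path_subst m \<pi> q)"
proof -
  have bounded: "\<forall>q. True \<longrightarrow> total_card m (path_sets m \<pi> q) < m * m + 1"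
  proof (intro allI impI)
    fix q
    have "card (path_sets m \<pi> q j) \<le> m" if "j \<in> {1..m}" for j
    proof -
      have "path_sets m \<pi> q j \<subseteq> {1..m}"
        using path_subst_subset[OF p _ that] m unfolding path_sets_def by simp
      then have "card (path_sets m \<pi> q j) \<le> card {1..m}"
        by (rule card_mono[OF finite_atLeastAtMost])
      then show ?thesis by simp
    qed
    then have "total_card m (path_sets m \<pi> q) \<le> m * m"
      unfolding total_card_def using sum_bounded_above[of "{1..m}" _ m] by simp
    then show "total_card m (path_sets m \<pi> q) < m * m + 1" by simp
  qed
  obtain q where "\<forall>r. True \<longrightarrow> total_card m (path_sets m \<pi> r) \<le> total_card m (path_sets m \<pi> q)"
    using Lattices_Big.ex_has_greatest_nat[OF TrueI bounded] by blast
  then show ?thesis using positive_if_total_card_maximal[OF p ir m] by blast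
qed

lemma rauzy_class_positive_path_bound:
  assumes m: "2 \<le> m" and p0: "\<pi>0 permutes {1..m}" and ir0: "irreducible m \<pi>0"
  shows "\<exists>B. \<forall>\<pi>\<in>rauzy_class m \<pi>0. \<exists>q. positive_subst m (path_subst m \<pi> q) \<and> length q \<le> B"
proof -
  have "\<forall>\<pi>\<in>rauzy_class m \<pi>0. \<exists>q. positive_subst m (path_subst m \<pi> q)"
    using exists_positive_path rauzy_class_permutes_irreducible[OF _ p0 ir0] m by fastforce
  then obtain f where f: "\<forall>\<pi>\<in>rauzy_class m \<pi>0. positive_subst m (path_subst m \<pi> (f \<pi>))"
    by (metis bchoice)
  have "finite (rauzy_class m \<pi>0)" using finite_rauzy_class[OF p0 ir0] m by simp
  then have "\<forall>\<pi>\<in>rauzy_class m \<pi>0. length (f \<pi>) \<le> Max ((\<lambda>\<pi>. length (f \<pi>)) ` rauzy_class m \<pi>0)"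
    by simp
  then show ?thesis using f by blast
qed

section \<open>The path and its return words\<close>

lemma map_snd_path_edges: "map snd (path_edges m \<pi> q) = q"
  by (induction q arbitrary: \<pi>) auto

lemma simple_word_map: "simple_word (map f xs) \<Longrightarrow> simple_word xs"
  unfolding simple_word_def by (metis drop_map take_map length_map)

lemma simple_word_path_edges: "simple_word q \<Longrightarrow> simple_word (path_edges m \<pi> q)"
  by (rule simple_word_map[of snd]) (simp add: map_snd_path_edges)

lemma simple_word_replicate_append:
  assumes Y: "Y \<noteq> []" "hd Y \<noteq> a" "last Y \<noteq> a" "length Y \<le> N"
  shows "simple_word (replicate N a @ Y)"
  unfolding simple_word_def
proof (intro allI impI notI)
  let ?q = "replicate N a @ Y"
  fix i assume i: "1 \<le> i \<and> i < length ?q" and eq: "drop i ?q = take (length ?q - i) ?q"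
  let ?l = "length ?q - i"
  have prefix: "?q ! p = a" if "p < N" for p using that by (simp add: nth_append)
  have first: "?q ! N = hd Y" using Y(1) by (simp add: nth_append hd_conv_nth)
  have "length ?q - 1 = N + (length Y - 1)" using Y(1) by (cases Y) auto
  then have final: "?q ! (length ?q - 1) = last Y"
    using Y(1) by (simp add: nth_append last_conv_nth)
  show False
  proof (cases "?l \<le> N")
    case True
    have idx: "i + (?l - 1) = length ?q - 1" using i by linarith
    have "last Y = ?q ! (i + (?l - 1))" by (simp only: idx final)
    also have "\<dots> = drop i ?q ! (?l - 1)" using i by (intro nth_drop[symmetric]) simp
    also have "\<dots> = take ?l ?q ! (?l - 1)" by (simp only: eq)
    also have "\<dots> = ?q ! (?l - 1)" by (intro nth_take) (use i in arith)
    also have "\<dots> = a" by (rule prefix) (use i True in arith)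
    finally show False using Y(3) by simp
  next
    case False
    then have i_N: "i < N" using i Y(4) by simp
    have "hd Y = ?q ! (i + (N - i))" using first i_N by simp
    also have "\<dots> = drop i ?q ! (N - i)" using i by (intro nth_drop[symmetric]) simp
    also have "\<dots> = take ?l ?q ! (N - i)" by (simp only: eq)
    also have "\<dots> = ?q ! (N - i)" by (intro nth_take) (use False in arith)
    also have "\<dots> = a" by (rule prefix) (use i i_N in arith)
    finally show False using Y(2) by simp
  qed
qed

lemma hd_path_subst_La_replicate:
  assumes "\<pi> permutes {1..m}" "\<pi> 1 = m" and m: "1 \<le> m" and j: "j \<in> {1..m}"
  shows "hd (path_subst m \<pi> (replicate N La) j) = (if j \<le> N + 1 then 1 else j - N)"
  using assms(1,2)
proof (induction N arbitrary: \<pi>)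
  case 0
  then show ?case using j by simp
next
  case (Suc N)
  have K: "last_pre m \<pi> = 1" using last_pre_eqI[OF Suc.prems(1)] Suc.prems(2) m by simp
  have "rauzy_a m \<pi> permutes {1..m}" "rauzy_a m \<pi> 1 = m"
    using rauzy_a_permutes[OF Suc.prems(1) m] rauzy_a_low[of 1 m \<pi>] K Suc.prems(2) m by auto
  note IH = Suc.IH[OF this]
  have "hd (path_subst m \<pi> (replicate (Suc N) La) j)
      = hd (step_subst m La \<pi> (hd (path_subst m (rauzy_a m \<pi>) (replicate N La) j)))"
    by (simp add: rauzy_step_def hd_concat hd_map path_subst_nonempty step_subst_nonempty)
  then show ?case using IH K j by (auto simp: step_subst_def)
qed

lemma in_set_butlastI: "x \<in> set xs \<Longrightarrow> x \<noteq> last xs \<Longrightarrow> x \<in> set (butlast xs)"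
  by (induction xs) (auto split: if_splits)

lemma butlast_decomp:
  assumes "c \<in> set (butlast U)"
  obtains us d ds where "U = us @ c # d # ds"
proof -
  obtain us vs where vs: "butlast U = us @ c # vs" using assms split_list by metis
  have "U \<noteq> []" using assms by auto
  then have "U = us @ c # (vs @ [last U])" using vs append_butlast_last_id[of U] by simp
  moreover obtain d ds where "vs @ [last U] = d # ds" by (cases "vs @ [last U]") auto
  ultimately show ?thesis using that by simp
qed

lemma in_set_butlast_concat_map:
  assumes "a \<in> set (butlast ws)" "x \<in> set (f a)" "\<And>l. f l \<noteq> []"
  shows "x \<in> set (butlast (concat (map f ws)))"
proof -
  obtain us d ds where "ws = us @ a # d # ds" using butlast_decomp[OF assms(1)] .
  then have "concat (map f ws) = concat (map f us) @ f a @ (f d @ concat (map f ds))" by simp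
  then show ?thesis using assms(2) assms(3)[of d] by (simp add: butlast_append)
qed

lemma concat_map_factor:
  assumes "c \<in> set (butlast U)" "\<And>l. l \<in> set U \<Longrightarrow> f l \<noteq> [] \<and> hd (f l) = h"
  shows "\<exists>x y. concat (map f U) = x @ f c @ [h] @ y"
proof -
  obtain us d ds where U: "U = us @ c # d # ds" using butlast_decomp[OF assms(1)] .
  then have "d \<in> set U" by simp
  then have "f d \<noteq> []" "hd (f d) = h" using assms(2) by auto
  then obtain t where "f d = h # t" by (cases "f d") auto
  then have "concat (map f U) = concat (map f us) @ f c @ [h] @ (t @ concat (map f ds))"
    using U by simp
  then show ?thesis by blast
qed

lemma step_subst_Lb_Cons: "\<exists>t. step_subst m Lb \<pi> j = j # t"
  unfolding step_subst_def Let_def by auto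

text \<open>The final b makes a column of \<open>P'\<close> a prefix of the column of \<open>P' b\<close>; that column
  contains two different letters, one of which is not the last.\<close>

lemma letter_in_butlast_return_path:
  assumes P: "positive_subst m (path_subst m (rauzy_b m \<pi>) P)"
    and P': "positive_subst m (path_subst m (fold (rauzy_step m) P (rauzy_b m \<pi>)) P')"
    and m: "2 \<le> m" and j: "j \<in> {1..m}" and c: "c \<in> {1..m}"
  shows "c \<in> set (butlast (path_subst m \<pi> (Lb # P @ P' @ [Lb]) j))"
proof -
  let ?\<sigma> = "fold (rauzy_step m) P (rauzy_b m \<pi>)"
  define W where "W = path_subst m ?\<sigma> (P' @ [Lb]) j"
  obtain t where "step_subst m Lb (fold (rauzy_step m) P' ?\<sigma>) j = j # t"
    using step_subst_Lb_Cons by blast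
  then have "set (path_subst m ?\<sigma> P' j) \<subseteq> set W"
    unfolding W_def by (simp add: path_subst_snoc del: path_subst.simps)
  then have "1 \<in> set W" "2 \<in> set W" using P' j m unfolding positive_subst_def by auto
  moreover have "(1::nat) \<in> {1..m}" "(2::nat) \<in> {1..m}" using m by auto
  ultimately obtain a where a: "a \<in> {1..m}" "a \<in> set (butlast W)"
    using in_set_butlastI[of 1 W] in_set_butlastI[of 2 W] by fastforce
  have "path_subst m (rauzy_b m \<pi>) (P @ P' @ [Lb]) j
      = concat (map (path_subst m (rauzy_b m \<pi>) P) W)"
    unfolding W_def by (rule path_subst_append)
  moreover have "c \<in> set (path_subst m (rauzy_b m \<pi>) P a)"
    using P a(1) c unfolding positive_subst_def by blast
  ultimately have V: "c \<in> set (butlast (path_subst m (rauzy_b m \<pi>) (P @ P' @ [Lb]) j))"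
    using in_set_butlast_concat_map[OF a(2), where f = "path_subst m (rauzy_b m \<pi>) P"]
      path_subst_nonempty by simp
  have "path_subst m \<pi> (Lb # P @ P' @ [Lb]) j
      = concat (map (step_subst m Lb \<pi>) (path_subst m (rauzy_b m \<pi>) (P @ P' @ [Lb]) j))"
    by (simp add: rauzy_step_def)
  moreover have "c \<in> set (step_subst m Lb \<pi> c)" using step_subst_Lb_Cons[of m \<pi> c] by auto
  ultimately show ?thesis
    using in_set_butlast_concat_map[OF V, where f = "step_subst m Lb \<pi>"] step_subst_nonempty by simp
qed

text \<open>Every column of \<open>a\<^sup>N\<close> begins with the letter 1, so in the concatenation each
  column is followed by the letter 1 unless it comes last.\<close>

lemma good_return_words_La_replicate:
  assumes p: "\<pi> permutes {1..m}" and first: "\<pi> 1 = m" and m: "2 \<le> m" and N: "m \<le> N + 1"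
    and nonfinal: "\<And>j c. j \<in> {1..m} \<Longrightarrow> c \<in> {1..m} \<Longrightarrow>
      c \<in> set (butlast (path_subst m (fold (rauzy_step m) (replicate N La) \<pi>) Y j))"
    and k: "k \<in> {1..m}"
  shows "good_return_word m (path_subst m \<pi> (replicate N La @ Y))
    (path_subst m \<pi> (replicate N La) k)"
  unfolding good_return_word_def
proof (intro conjI ballI)
  let ?u = "path_subst m \<pi> (replicate N La)" and ?\<sigma> = "fold (rauzy_step m) (replicate N La) \<pi>"
  show "?u k \<noteq> []" by (rule path_subst_nonempty)
  have hd_1: "hd (?u l) = 1" if "l \<in> {1..m}" for l
    using hd_path_subst_La_replicate[OF p first _ that] N that m by simp
  fix j assume j: "j \<in> {1..m}"
  have heads: "?u l \<noteq> [] \<and> hd (?u l) = 1" if "l \<in> set (path_subst m ?\<sigma> Y j)" for l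
  proof -
    have "1 \<le> m" using m by simp
    then have "set (path_subst m ?\<sigma> Y j) \<subseteq> {1..m}"
      using path_subst_subset[OF fold_rauzy_step_permutes[OF p] _ j] by blast
    then have "l \<in> {1..m}" using that by blast
    then show ?thesis using hd_1 path_subst_nonempty by simp
  qed
  have "path_subst m \<pi> (replicate N La @ Y) j = concat (map ?u (path_subst m ?\<sigma> Y j))"
    by (rule path_subst_append)
  moreover have "\<exists>x y. concat (map ?u (path_subst m ?\<sigma> Y j)) = x @ ?u k @ [1] @ y"
    using concat_map_factor[OF nonfinal[OF j k] heads] .
  ultimately show "\<exists>x y. path_subst m \<pi> (replicate N La @ Y) j = x @ ?u k @ [hd (?u k)] @ y"
    using hd_1[OF k] by simp
qed

lemma positive_subst_if_good_return_words:
  assumes "\<And>k. k \<in> {1..m} \<Longrightarrow> good_return_word m \<zeta> (u k)"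
    and "\<And>i. i \<in> {1..m} \<Longrightarrow> \<exists>k\<in>{1..m}. i \<in> set (u k)"
  shows "positive_subst m \<zeta>"
  unfolding positive_subst_def
proof (intro ballI)
  fix i j assume i: "i \<in> {1..m}" and j: "j \<in> {1..m}"
  obtain k where "k \<in> {1..m}" "i \<in> set (u k)" using assms(2)[OF i] by blast
  then show "i \<in> set (\<zeta> j)" using assms(1) j unfolding good_return_word_def by fastforce
qed

lemma rauzy_matrix_pos_iff: "0 < rauzy_matrix m \<pi> q i j \<longleftrightarrow> j \<in> set (path_subst m \<pi> q i)"
  unfolding rauzy_matrix_def subst_matrix_def
  using count_list_0_iff[of "path_subst m \<pi> q i" j] by auto

lemma return_path_properties:
  assumes p: "\<pi> permutes {1..m}" "irreducible m \<pi>" and first: "\<pi> 1 = m" and m: "2 \<le> m"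
    and \<sigma>: "\<sigma> = rauzy_b m (fold (rauzy_step m) (replicate N La) \<pi>)"
    and P: "positive_subst m (path_subst m \<sigma> P)"
    and P': "positive_subst m (path_subst m (fold (rauzy_step m) P \<sigma>) P')"
    and N: "length P + length P' + m \<le> N"
  defines "q \<equiv> replicate N La @ Lb # P @ P' @ [Lb]"
    and "u \<equiv> path_subst m \<pi> (replicate N La)"
  shows "simple_word (path_edges m \<pi> q)"
    and "positive_subst m (path_subst m \<pi> q)"
    and "\<forall>k\<in>{1..m}. good_return_word m (path_subst m \<pi> q) (u k)"
    and "generates_Zm m (\<lambda>k. pop_vec (u k))"
proof -
  show "simple_word (path_edges m \<pi> q)"
    unfolding q_def using N m by (intro simple_word_path_edges simple_word_replicate_append) auto
  show good: "\<forall>k\<in>{1..m}. good_return_word m (path_subst m \<pi> q) (u k)"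
    using good_return_words_La_replicate[OF p(1) first m]
      letter_in_butlast_return_path[OF P[unfolded \<sigma>] P'[unfolded \<sigma>] m] N
    unfolding q_def u_def by simp
  show generates: "generates_Zm m (\<lambda>k. pop_vec (u k))"
    unfolding u_def using path_subst_generates_Zm[OF p m] .
  show "positive_subst m (path_subst m \<pi> q)"
    using positive_subst_if_good_return_words good generates_Zm_occurs[OF generates] by blast
qed

theorem lemma7p1:
  fixes m :: nat and \<pi>0 :: "nat \<Rightarrow> nat"
  assumes "2 \<le> m" and "is_perm m \<pi>0" and "irreducible m \<pi>0"
  shows "\<exists>\<pi>\<in>rauzy_class m \<pi>0. \<exists>q :: rlabel list.
           simple_word (path_edges m \<pi> q)
         \<and> (\<forall>i\<in>{1..m}. \<forall>j\<in>{1..m}. 0 < rauzy_matrix m \<pi> q i j)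
         \<and> (\<exists>u :: nat \<Rightarrow> nat list.
               (\<forall>k\<in>{1..m}. good_return_word m (path_subst m \<pi> q) (u k))
             \<and> generates_Zm m (\<lambda>k. pop_vec (u k)))"
proof -
  note m = assms(1) and ir0 = assms(3)
  have p0: "\<pi>0 permutes {1..m}" using assms(2) is_perm_iff_permutes by blast
  obtain \<pi> where \<pi>: "\<pi> \<in> rauzy_class m \<pi>0" "\<pi> 1 = m"
    using rauzy_class_has_standard[OF m p0 ir0] by blast
  have p: "\<pi> permutes {1..m}" "irreducible m \<pi>"
    using rauzy_class_permutes_irreducible[OF \<pi>(1) p0 ir0] m by auto
  obtain B where B: "\<forall>\<sigma>\<in>rauzy_class m \<pi>0. \<exists>q. positive_subst m (path_subst m \<sigma> q) \<and> length q \<le> B"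
    using rauzy_class_positive_path_bound[OF m p0 ir0] by blast
  define N where "N = 2 * B + m"
  define \<sigma> where "\<sigma> = rauzy_b m (fold (rauzy_step m) (replicate N La) \<pi>)"
  have "\<sigma> \<in> rauzy_class m \<pi>0"
    using rauzy_class_step[OF rauzy_class_fold[OF \<pi>(1), of "replicate N La"], of Lb]
    by (simp add: \<sigma>_def rauzy_step_def)
  then obtain P where P: "positive_subst m (path_subst m \<sigma> P)" "length P \<le> B"
    using B by blast
  obtain P' where P': "positive_subst m (path_subst m (fold (rauzy_step m) P \<sigma>) P')" "length P' \<le> B"
    using B rauzy_class_fold[OF \<open>\<sigma> \<in> rauzy_class m \<pi>0\<close>] by blast
  have "length P + length P' + m \<le> N" using P(2) P'(2) N_def by simp
  note props = return_path_properties[OF p \<pi>(2) m \<sigma>_def P(1) P'(1) this]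
  show ?thesis
    using \<pi>(1) props unfolding positive_subst_def rauzy_matrix_pos_iff by blast
qed

end
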